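(* In the setting described in the context, for every partial construction map $\zeta'$, $$E'(\zeta')=\sum_{k\in U}w_k\Big(1-\prod_{j\in T_k}\big(1-P^{\zeta'(j)}_{i_kj}\big)\Big).$$
   Context: An SPSC instance: finite sets $S$ (services), $V$ (nodes), $U$ (users); sizes $s_i>0$; capacities $c_j>0$; for each user $k$ a service $i_k\in S$, a set $T_k\subseteq V$, a reward $w_k>0$. Let $\{x_{ij}\},\{y_k\}$ be an optimal solution of the LP with nonnegative variables: maximize $\sum_ky_kw_k$ s.t. $y_k\le\sum_{j\in T_k}x_{i_kj}$, $y_k\le1$; $\sum_ix_{ij}s_i\le c_j$; $x_{ij}=0$ if $s_i>c_j$; $0\le x_{ij}\le1$. Let $\beta:=1/4,\gamma:=1/2,\delta:=1/4$, $\mathbb N=\{1,2,\dots\}$. For $j\in V$: $P_j^\oplus:=\{i:c_j/2<s_i\le c_j\}$, $P_j^\ominus:=\{i:c_j/4<s_i\le c_j/2\}$, $P_j^q:=\{i:\gamma^qc_j\beta<s_i\le\gamma^{q-1}c_j\beta\}$ ($q\in\mathbb N$); $d_j^q:=\sum_{i\in P_j^q}x_{ij}$ for $q\in\mathbb N\cup\{\oplus,\ominus\}$; $v_j:=\delta c_j/\sum_{i:s_i\le c_j\beta}s_ix_{ij}$; $n_j^q:=\lceil v_jd_j^q\rceil$; $h_j:=d_j^\ominus$ if $d_j^\ominus<2$, else $d_j^\ominus/2$. A construction map $\zeta:V\to\{1,2,3\}$ has slot set $\Lambda(\zeta)$ (slot $\sigma$ has node $\nu(\sigma)$, class $\kappa(\sigma)$):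 for each $j$, one slot of class $\oplus$ if $\zeta(j)=1$; two slots of class $\ominus$ if $\zeta(j)=2$; for each $q\in\mathbb N$, $n_j^q$ slots of class $q$ if $\zeta(j)=3$; no other slots on $j$. A slot allocation of $\Lambda$ is $\tau:\Lambda\to S$ with $\tau(\sigma)\in P^{\kappa(\sigma)}_{\nu(\sigma)}$; $X^\tau_i:=\{j:\exists\sigma,\nu(\sigma)=j,\tau(\sigma)=i\}$; $f_\tau(k):=\mathbf 1[T_k\cap X^\tau_{i_k}\ne\emptyset]$. Random experiment: $\zeta(j)$ independent over $j$, equal to $1,2,3$ with probabilities $\delta d_j^\oplus,\ \delta h_j,\ 1-\delta d_j^\oplus-\delta h_j$; given $\zeta$, each slot $\sigma\in\Lambda(\zeta)$ independently gets $\tau(\sigma)=i$ with probability $x_{i\nu(\sigma)}/d^{\kappa(\sigma)}_{\nu(\sigma)}$, $i\in P^{\kappa(\sigma)}_{\nu(\sigma)}$. A partial construction map is $\zeta':V\to\{1,2,3,\emptyset\}$; $M(\zeta')$ is the set of construction maps agreeing with $\zeta'$ wherever $\zeta'(j)\ne\emptyset$; $E'(\zeta'):=\mathbb E[\sum_kf_\tau(k)w_k\mid\zeta\in M(\zeta')]$. For $i\in S$, $j\in V$ define $P^a_{ij}$, $a\in\{1,2,3\}$: if $s_i>c_j$, all are $0$; if $i\in P_j^\oplus$, $P^1_{ij}:=x_{ij}/d_j^\oplus$ and $P^2_{ij}=P^3_{ij}:=0$; if $i\in P_j^\ominus$, $P^2_{ij}:=1-(1-x_{ij}/d_j^\ominus)^2$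 and $P^1_{ij}=P^3_{ij}:=0$; if $i\in P_j^q$ for some $q\in\mathbb N$, $P^3_{ij}:=1-(1-x_{ij}/d_j^q)^{n_j^q}$ and $P^1_{ij}=P^2_{ij}:=0$. Further $P^\emptyset_{ij}:=\delta d_j^\oplus P^1_{ij}+\delta h_jP^2_{ij}+(1-\delta d_j^\oplus-\delta h_j)P^3_{ij}$. *)

theory Defs
  imports "HOL-Probability.Probability"
begin

definition beta_c :: real where "beta_c = 1/4"
definition gamma_c :: real where "gamma_c = 1/2"
definition delta_c :: real where "delta_c = 1/4"

text \<open>SPSC instance: services S, nodes V, users U, sizes s, capacities c,
  requested service svc k (= i_k), node sets T k, rewards w.\<close>
definition spsc_instance ::
  "'s set \<Rightarrow> 'v set \<Rightarrow> 'u set \<Rightarrow> ('s \<Rightarrow> real) \<Rightarrow> ('v \<Rightarrow> real) \<Rightarrow>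
   ('u \<Rightarrow> 's) \<Rightarrow> ('u \<Rightarrow> 'v set) \<Rightarrow> ('u \<Rightarrow> real) \<Rightarrow> bool" where
  "spsc_instance S V U s c svc T w \<longleftrightarrow>
     finite S \<and> finite V \<and> finite U \<and>
     (\<forall>i\<in>S. s i > 0) \<and> (\<forall>j\<in>V. c j > 0) \<and>
     (\<forall>k\<in>U. svc k \<in> S \<and> T k \<subseteq> V \<and> w k > 0)"

definition lp_feasible ::
  "'s set \<Rightarrow> 'v set \<Rightarrow> 'u set \<Rightarrow> ('s \<Rightarrow> real) \<Rightarrow> ('v \<Rightarrow> real) \<Rightarrow>
   ('u \<Rightarrow> 's) \<Rightarrow> ('u \<Rightarrow> 'v set) \<Rightarrow> ('s \<Rightarrow> 'v \<Rightarrow> real) \<Rightarrow> ('u \<Rightarrow> real) \<Rightarrow> bool" where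
  "lp_feasible S V U s c svc T x y \<longleftrightarrow>
     (\<forall>k\<in>U. 0 \<le> y k \<and> y k \<le> 1 \<and> y k \<le> (\<Sum>j\<in>T k. x (svc k) j)) \<and>
     (\<forall>j\<in>V. (\<Sum>i\<in>S. x i j * s i) \<le> c j) \<and>
     (\<forall>i\<in>S. \<forall>j\<in>V. 0 \<le> x i j \<and> x i j \<le> 1 \<and> (s i > c j \<longrightarrow> x i j = 0))"

definition lp_optimal ::
  "'s set \<Rightarrow> 'v set \<Rightarrow> 'u set \<Rightarrow> ('s \<Rightarrow> real) \<Rightarrow> ('v \<Rightarrow> real) \<Rightarrow>
   ('u \<Rightarrow> 's) \<Rightarrow> ('u \<Rightarrow> 'v set) \<Rightarrow> ('u \<Rightarrow> real) \<Rightarrow>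
   ('s \<Rightarrow> 'v \<Rightarrow> real) \<Rightarrow> ('u \<Rightarrow> real) \<Rightarrow> bool" where
  "lp_optimal S V U s c svc T w x y \<longleftrightarrow>
     lp_feasible S V U s c svc T x y \<and>
     (\<forall>x' y'. lp_feasible S V U s c svc T x' y' \<longrightarrow>
        (\<Sum>k\<in>U. y' k * w k) \<le> (\<Sum>k\<in>U. y k * w k))"

text \<open>Classes: Plus (the class \<oplus>), Minus (the class \<ominus>), Lev q for q \<ge> 1.\<close>
datatype cls = Plus | Minus | Lev nat

definition Pcls :: "'s set \<Rightarrow> ('s \<Rightarrow> real) \<Rightarrow> ('v \<Rightarrow> real) \<Rightarrow> 'v \<Rightarrow> cls \<Rightarrow> 's set" where
  "Pcls S s c j \<kappa> = (case \<kappa> of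
      Plus \<Rightarrow> {i\<in>S. c j / 2 < s i \<and> s i \<le> c j}
    | Minus \<Rightarrow> {i\<in>S. c j / 4 < s i \<and> s i \<le> c j / 2}
    | Lev q \<Rightarrow> {i\<in>S. gamma_c ^ q * c j * beta_c < s i \<and> s i \<le> gamma_c ^ (q - 1) * c j * beta_c})"

definition dd :: "'s set \<Rightarrow> ('s \<Rightarrow> real) \<Rightarrow> ('v \<Rightarrow> real) \<Rightarrow> ('s \<Rightarrow> 'v \<Rightarrow> real) \<Rightarrow> 'v \<Rightarrow> cls \<Rightarrow> real" where
  "dd S s c x j \<kappa> = (\<Sum>i\<in>Pcls S s c j \<kappa>. x i j)"

definition vv :: "'s set \<Rightarrow> ('s \<Rightarrow> real) \<Rightarrow> ('v \<Rightarrow> real) \<Rightarrow> ('s \<Rightarrow> 'v \<Rightarrow> real) \<Rightarrow> 'v \<Rightarrow> real" where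
  "vv S s c x j = delta_c * c j / (\<Sum>i\<in>{i\<in>S. s i \<le> c j * beta_c}. s i * x i j)"

definition nn :: "'s set \<Rightarrow> ('s \<Rightarrow> real) \<Rightarrow> ('v \<Rightarrow> real) \<Rightarrow> ('s \<Rightarrow> 'v \<Rightarrow> real) \<Rightarrow> 'v \<Rightarrow> nat \<Rightarrow> nat" where
  "nn S s c x j q = nat \<lceil>vv S s c x j * dd S s c x j (Lev q)\<rceil>"

definition hh :: "'s set \<Rightarrow> ('s \<Rightarrow> real) \<Rightarrow> ('v \<Rightarrow> real) \<Rightarrow> ('s \<Rightarrow> 'v \<Rightarrow> real) \<Rightarrow> 'v \<Rightarrow> real" where
  "hh S s c x j = (if dd S s c x j Minus < 2 then dd S s c x j Minus else dd S s c x j Minus / 2)"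

text \<open>Values of a construction map: C1, C2, C3 stand for 1, 2, 3.
  A partial construction map has values in cval option (None = \<emptyset>).\<close>
datatype cval = C1 | C2 | C3

type_synonym 'v slot = "'v \<times> cls \<times> nat"

definition slots :: "'s set \<Rightarrow> ('s \<Rightarrow> real) \<Rightarrow> ('v \<Rightarrow> real) \<Rightarrow> ('s \<Rightarrow> 'v \<Rightarrow> real) \<Rightarrow>
    'v set \<Rightarrow> ('v \<Rightarrow> cval) \<Rightarrow> 'v slot set" where
  "slots S s c x V \<zeta> =
     {(j, Plus, 0) | j. j \<in> V \<and> \<zeta> j = C1}
   \<union> {(j, Minus, m) | j m. j \<in> V \<and> \<zeta> j = C2 \<and> m < 2}
   \<union> {(j, Lev q, m) | j q m. j \<in> V \<and> \<zeta> j = C3 \<and> 1 \<le> q \<and> m < nn S s c x j q}"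

definition Xset :: "'v slot set \<Rightarrow> ('v slot \<Rightarrow> 's) \<Rightarrow> 's \<Rightarrow> 'v set" where
  "Xset L \<tau> i = {j. \<exists>\<sigma>\<in>L. fst \<sigma> = j \<and> \<tau> \<sigma> = i}"

definition ftau :: "'v slot set \<Rightarrow> ('v slot \<Rightarrow> 's) \<Rightarrow> ('u \<Rightarrow> 's) \<Rightarrow> ('u \<Rightarrow> 'v set) \<Rightarrow> 'u \<Rightarrow> real" where
  "ftau L \<tau> svc T k = (if T k \<inter> Xset L \<tau> (svc k) \<noteq> {} then 1 else 0)"

definition node_pmf :: "'s set \<Rightarrow> ('s \<Rightarrow> real) \<Rightarrow> ('v \<Rightarrow> real) \<Rightarrow> ('s \<Rightarrow> 'v \<Rightarrow> real) \<Rightarrow> 'v \<Rightarrow> cval pmf" where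
  "node_pmf S s c x j = embed_pmf (\<lambda>a. case a of
       C1 \<Rightarrow> delta_c * dd S s c x j Plus
     | C2 \<Rightarrow> delta_c * hh S s c x j
     | C3 \<Rightarrow> 1 - delta_c * dd S s c x j Plus - delta_c * hh S s c x j)"

definition zeta_pmf :: "'s set \<Rightarrow> ('s \<Rightarrow> real) \<Rightarrow> ('v \<Rightarrow> real) \<Rightarrow> ('s \<Rightarrow> 'v \<Rightarrow> real) \<Rightarrow> 'v set \<Rightarrow> ('v \<Rightarrow> cval) pmf" where
  "zeta_pmf S s c x V = Pi_pmf V C3 (node_pmf S s c x)"

definition slot_pmf :: "'s set \<Rightarrow> ('s \<Rightarrow> real) \<Rightarrow> ('v \<Rightarrow> real) \<Rightarrow> ('s \<Rightarrow> 'v \<Rightarrow> real) \<Rightarrow> 'v slot \<Rightarrow> 's pmf" where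
  "slot_pmf S s c x \<sigma> = embed_pmf (\<lambda>i.
      if i \<in> Pcls S s c (fst \<sigma>) (fst (snd \<sigma>))
      then x i (fst \<sigma>) / dd S s c x (fst \<sigma>) (fst (snd \<sigma>)) else 0)"

definition tau_pmf :: "'s set \<Rightarrow> ('s \<Rightarrow> real) \<Rightarrow> ('v \<Rightarrow> real) \<Rightarrow> ('s \<Rightarrow> 'v \<Rightarrow> real) \<Rightarrow> 'v set \<Rightarrow>
    ('v \<Rightarrow> cval) \<Rightarrow> ('v slot \<Rightarrow> 's) pmf" where
  "tau_pmf S s c x V \<zeta> = Pi_pmf (slots S s c x V \<zeta>) undefined (slot_pmf S s c x)"

definition spsc_experiment :: "'s set \<Rightarrow> ('s \<Rightarrow> real) \<Rightarrow> ('v \<Rightarrow> real) \<Rightarrow> ('s \<Rightarrow> 'v \<Rightarrow> real) \<Rightarrow> 'v set \<Rightarrow>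
    (('v \<Rightarrow> cval) \<times> ('v slot \<Rightarrow> 's)) pmf" where
  "spsc_experiment S s c x V =
     bind_pmf (zeta_pmf S s c x V) (\<lambda>\<zeta>. map_pmf (\<lambda>\<tau>. (\<zeta>, \<tau>)) (tau_pmf S s c x V \<zeta>))"

definition Mset :: "'v set \<Rightarrow> ('v \<Rightarrow> cval option) \<Rightarrow> ('v \<Rightarrow> cval) set" where
  "Mset V \<zeta>' = {\<zeta>. \<forall>j\<in>V. case \<zeta>' j of None \<Rightarrow> True | Some a \<Rightarrow> \<zeta> j = a}"

definition total_reward :: "'s set \<Rightarrow> ('s \<Rightarrow> real) \<Rightarrow> ('v \<Rightarrow> real) \<Rightarrow> ('s \<Rightarrow> 'v \<Rightarrow> real) \<Rightarrow> 'v set \<Rightarrow>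
    'u set \<Rightarrow> ('u \<Rightarrow> 's) \<Rightarrow> ('u \<Rightarrow> 'v set) \<Rightarrow> ('u \<Rightarrow> real) \<Rightarrow>
    ('v \<Rightarrow> cval) \<Rightarrow> ('v slot \<Rightarrow> 's) \<Rightarrow> real" where
  "total_reward S s c x V U svc T w \<zeta> \<tau> =
     (\<Sum>k\<in>U. ftau (slots S s c x V \<zeta>) \<tau> svc T k * w k)"

definition Eprime :: "'s set \<Rightarrow> ('s \<Rightarrow> real) \<Rightarrow> ('v \<Rightarrow> real) \<Rightarrow> ('s \<Rightarrow> 'v \<Rightarrow> real) \<Rightarrow> 'v set \<Rightarrow>
    'u set \<Rightarrow> ('u \<Rightarrow> 's) \<Rightarrow> ('u \<Rightarrow> 'v set) \<Rightarrow> ('u \<Rightarrow> real) \<Rightarrow> ('v \<Rightarrow> cval option) \<Rightarrow> real" where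
  "Eprime S s c x V U svc T w \<zeta>' =
     measure_pmf.expectation
       (cond_pmf (spsc_experiment S s c x V) {(\<zeta>, \<tau>). \<zeta> \<in> Mset V \<zeta>'})
       (\<lambda>(\<zeta>, \<tau>). total_reward S s c x V U svc T w \<zeta> \<tau>)"

definition Pval :: "'s set \<Rightarrow> ('s \<Rightarrow> real) \<Rightarrow> ('v \<Rightarrow> real) \<Rightarrow> ('s \<Rightarrow> 'v \<Rightarrow> real) \<Rightarrow>
    cval \<Rightarrow> 's \<Rightarrow> 'v \<Rightarrow> real" where
  "Pval S s c x a i j =
     (if s i > c j then 0
      else (case a of
        C1 \<Rightarrow> (if i \<in> Pcls S s c j Plus then x i j / dd S s c x j Plus else 0)
      | C2 \<Rightarrow> (if i \<in> Pcls S s c j Minus then 1 - (1 - x i j / dd S s c x j Minus) ^ 2 else 0)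
      | C3 \<Rightarrow> (if \<exists>q\<ge>1. i \<in> Pcls S s c j (Lev q)
               then (let q = (SOME q. 1 \<le> q \<and> i \<in> Pcls S s c j (Lev q)) in
                     1 - (1 - x i j / dd S s c x j (Lev q)) ^ nn S s c x j q)
               else 0)))"

definition Pgen :: "'s set \<Rightarrow> ('s \<Rightarrow> real) \<Rightarrow> ('v \<Rightarrow> real) \<Rightarrow> ('s \<Rightarrow> 'v \<Rightarrow> real) \<Rightarrow>
    cval option \<Rightarrow> 's \<Rightarrow> 'v \<Rightarrow> real" where
  "Pgen S s c x a i j = (case a of
      Some b \<Rightarrow> Pval S s c x b i j
    | None \<Rightarrow> delta_c * dd S s c x j Plus * Pval S s c x C1 i j
            + delta_c * hh S s c x j * Pval S s c x C2 i j
            + (1 - delta_c * dd S s c x j Plus - delta_c * hh S s c x j) * Pval S s c x C3 i j)"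

end

theory Submission
  imports Defs
begin

text \<open>Given the construction map \<open>\<zeta>\<close>, the slots are filled independently, so user \<open>k\<close> is unserved
  exactly when no slot on a node of \<open>T k\<close> receives the service \<open>svc k\<close>. Grouping the slots by
  node, this probability is a product over \<open>T k\<close> whose factor at \<open>j\<close> is
  \<open>1 - Pval (\<zeta> j) (svc k) j\<close>, because only the slots of the unique class containing \<open>svc k\<close>
  can pick it. Conditioning on \<open>\<zeta> \<in> M(\<zeta>')\<close> keeps the nodes independent: it fixes
  \<open>\<zeta> j = \<zeta>' j\<close> where \<open>\<zeta>'\<close> is defined and leaves the other nodes with their original law, under
  which the mean of \<open>1 - Pval a\<close> is \<open>1 - Pgen None\<close>. Linearity of expectation over the users
  concludes.\<close>

lemma pmf_bind_Pair:
  "pmf (bind_pmf Z (\<lambda>z. map_pmf (Pair z) (K z))) (a, b) = pmf Z a * pmf (K a) b"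
proof -
  have "pmf (map_pmf (Pair z) (K z)) (a, b) = indicator {a} z * pmf (K a) b" for z
  proof (cases "z = a")
    case True
    then show ?thesis by (simp add: pmf_map_inj' inj_on_def)
  next
    case False
    then have "(a, b) \<notin> set_pmf (map_pmf (Pair z) (K z))" by auto
    with False show ?thesis by (simp add: pmf_eq_0_set_pmf)
  qed
  then show ?thesis by (simp add: pmf_bind measure_pmf_single)
qed

lemma cond_bind_Pair_fst:
  assumes "set_pmf Z \<inter> M \<noteq> {}"
  shows "cond_pmf (bind_pmf Z (\<lambda>z. map_pmf (Pair z) (K z))) {(z, t). z \<in> M}
       = bind_pmf (cond_pmf Z M) (\<lambda>z. map_pmf (Pair z) (K z))"
proof -
  let ?B = "bind_pmf Z (\<lambda>z. map_pmf (Pair z) (K z))"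
  have "map_pmf fst ?B = Z"
    by (simp add: map_bind_pmf pmf.map_comp o_def bind_return_pmf')
  moreover have "{(z, t). z \<in> M} = fst -` M" by auto
  ultimately have prob: "measure ?B {(z, t). z \<in> M} = measure Z M"
    by (metis measure_map_pmf)
  then have ne: "set_pmf ?B \<inter> {(z, t). z \<in> M} \<noteq> {}"
    using assms by (metis measure_pmf_zero_iff)
  show ?thesis
  proof (rule pmf_eqI)
    fix p :: "'a \<times> 'b"
    show "pmf (cond_pmf ?B {(z, t). z \<in> M}) p
        = pmf (bind_pmf (cond_pmf Z M) (\<lambda>z. map_pmf (Pair z) (K z))) p"
      by (cases p) (simp add: pmf_cond[OF ne] pmf_cond[OF assms] prob pmf_bind_Pair)
  qed
qed

lemma integral_bind_pmf_bounded:
  fixes f :: "'b \<Rightarrow> real"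
  assumes "\<And>y. \<bar>f y\<bar> \<le> B"
  shows "measure_pmf.expectation (bind_pmf M N) f
       = measure_pmf.expectation M (\<lambda>x. measure_pmf.expectation (N x) f)"
  unfolding measure_pmf_bind
  by (rule integral_bind[where K = "count_space UNIV" and B = B and B' = 1])
     (use assms in \<open>auto simp: measure_pmf_in_subprob_algebra\<close>)

lemma cond_Pi_pmf_Pi:
  assumes fin: "finite A" and ne: "\<And>j. j \<in> A \<Longrightarrow> set_pmf (p j) \<inter> B j \<noteq> {}"
  shows "cond_pmf (Pi_pmf A dflt p) (Pi A B) = Pi_pmf A dflt (\<lambda>j. cond_pmf (p j) (B j))"
proof (rule pmf_eqI)
  fix f
  have prob: "measure (Pi_pmf A dflt p) (Pi A B) = (\<Prod>j\<in>A. measure (p j) (B j))"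
    using fin by (rule measure_Pi_pmf_Pi)
  have "measure (p j) (B j) \<noteq> 0" if "j \<in> A" for j
    using ne[OF that] by (simp add: measure_pmf_zero_iff)
  then have "measure (Pi_pmf A dflt p) (Pi A B) \<noteq> 0"
    unfolding prob using fin by simp
  then have ne_Pi: "set_pmf (Pi_pmf A dflt p) \<inter> Pi A B \<noteq> {}"
    by (simp add: measure_pmf_zero_iff)
  show "pmf (cond_pmf (Pi_pmf A dflt p) (Pi A B)) f = pmf (Pi_pmf A dflt (\<lambda>j. cond_pmf (p j) (B j))) f"
  proof (cases "f \<in> Pi A B")
    case True
    then have "pmf (cond_pmf (p j) (B j)) (f j) = pmf (p j) (f j) / measure (p j) (B j)"
      if "j \<in> A" for j
      using that by (simp add: pmf_cond[OF ne[OF that]] Pi_iff)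
    with True show ?thesis
      by (auto simp: pmf_cond[OF ne_Pi] pmf_Pi[OF fin] prob prod_dividef)
  next
    case False
    then obtain j where "j \<in> A" "f j \<notin> B j" by auto
    with False show ?thesis
      by (auto simp: pmf_cond ne ne_Pi pmf_Pi fin intro!: prod_zero)
  qed
qed

lemma expectation_prod_Pi_pmf_subset:
  fixes f :: "'a \<Rightarrow> 'b \<Rightarrow> real"
  assumes "finite A" "A' \<subseteq> A"
    and "\<And>x. x \<in> A' \<Longrightarrow> integrable (measure_pmf (p x)) (f x)"
    and "\<And>x y. x \<in> A' \<Longrightarrow> y \<in> set_pmf (p x) \<Longrightarrow> 0 \<le> f x y"
  shows "measure_pmf.expectation (Pi_pmf A dflt p) (\<lambda>y. \<Prod>x\<in>A'. f x (y x))
       = (\<Prod>x\<in>A'. measure_pmf.expectation (p x) (f x))"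
proof -
  have "finite A'" using assms(1,2) by (rule finite_subset[rotated])
  have "measure_pmf.expectation (Pi_pmf A' dflt p) (\<lambda>y. \<Prod>x\<in>A'. f x (y x))
      = measure_pmf.expectation (Pi_pmf A dflt p) (\<lambda>y. \<Prod>x\<in>A'. f x (y x))"
    by (simp add: Pi_pmf_subset[OF assms(1,2)] cong: prod.cong)
  moreover have "measure_pmf.expectation (Pi_pmf A' dflt p) (\<lambda>y. \<Prod>x\<in>A'. f x (y x))
      = (\<Prod>x\<in>A'. measure_pmf.expectation (p x) (f x))"
    using \<open>finite A'\<close> assms(3,4) by (rule expectation_prod_Pi_pmf)
  ultimately show ?thesis by simp
qed

lemma measure_Pi_pmf_avoid:
  assumes "finite L"
  shows "measure (Pi_pmf L dflt Q) {\<tau>. \<forall>\<sigma>\<in>L. R \<sigma> \<longrightarrow> \<tau> \<sigma> \<noteq> i}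
       = (\<Prod>\<sigma>\<in>L. if R \<sigma> then 1 - pmf (Q \<sigma>) i else 1)"
proof -
  have "{\<tau>. \<forall>\<sigma>\<in>L. R \<sigma> \<longrightarrow> \<tau> \<sigma> \<noteq> i} = Pi L (\<lambda>\<sigma>. if R \<sigma> then - {i} else UNIV)"
    by (auto simp: Pi_def)
  moreover have "measure (Q \<sigma>) (if R \<sigma> then - {i} else UNIV)
      = (if R \<sigma> then 1 - pmf (Q \<sigma>) i else 1)" for \<sigma>
    using measure_pmf.prob_compl[of "{i}" "Q \<sigma>"] by (simp add: measure_pmf_single Compl_eq_Diff_UNIV)
  ultimately show ?thesis
    by (simp add: measure_Pi_pmf_Pi[OF assms])
qed

lemma cond_pmf_UNIV: "cond_pmf p UNIV = p"
  by (rule pmf_eqI) (simp add: pmf_cond set_pmf_not_empty)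

lemma cond_pmf_singleton: "a \<in> set_pmf p \<Longrightarrow> cond_pmf p {a} = return_pmf a"
  by (rule pmf_eqI) (auto simp: pmf_cond measure_pmf_single set_pmf_iff)

lemma expectation_one_minus_indicator:
  "measure_pmf.expectation p (\<lambda>t. 1 - indicator N t) = 1 - measure p N"
proof -
  have "(\<lambda>t. 1 - indicator N t :: real) = indicator (- N)" by (auto simp: indicator_def)
  then show ?thesis using measure_pmf.prob_compl[of N p] by (simp add: Compl_eq_Diff_UNIV)
qed

lemma UNIV_cval: "(UNIV :: cval set) = {C1, C2, C3}"
  using cval.exhaust by auto

instance cval :: finite
  by standard (simp add: UNIV_cval)

primrec allowed_values :: "'a option \<Rightarrow> 'a set" where
  "allowed_values None = UNIV"
| "allowed_values (Some a) = {a}"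

lemma in_allowed_values_iff:
  "a \<in> allowed_values v \<longleftrightarrow> (case v of None \<Rightarrow> True | Some b \<Rightarrow> a = b)"
  by (cases v) auto

lemma Mset_eq_Pi: "Mset V \<zeta>' = Pi V (\<lambda>j. allowed_values (\<zeta>' j))"
  by (auto simp: Mset_def Pi_def in_allowed_values_iff)

locale fractional_placement =
  fixes S :: "'s set" and V :: "'v set" and s :: "'s \<Rightarrow> real" and c :: "'v \<Rightarrow> real"
    and x :: "'s \<Rightarrow> 'v \<Rightarrow> real"
  assumes finite_S: "finite S" and finite_V: "finite V"
    and size_pos: "i \<in> S \<Longrightarrow> 0 < s i"
    and capacity_pos: "j \<in> V \<Longrightarrow> 0 < c j"
    and x_nonneg: "i \<in> S \<Longrightarrow> j \<in> V \<Longrightarrow> 0 \<le> x i j"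
    and capacity: "j \<in> V \<Longrightarrow> (\<Sum>i\<in>S. x i j * s i) \<le> c j"
begin

abbreviation "P j \<kappa> \<equiv> Pcls S s c j \<kappa>"
abbreviation "d j \<kappa> \<equiv> dd S s c x j \<kappa>"
abbreviation "h j \<equiv> hh S s c x j"
abbreviation "n j q \<equiv> nn S s c x j q"
abbreviation "node_dist j \<equiv> node_pmf S s c x j"
abbreviation "slot_dist \<sigma> \<equiv> slot_pmf S s c x \<sigma>"

lemma Pcls_subset: "P j \<kappa> \<subseteq> S"
  by (cases \<kappa>) (auto simp: Pcls_def)

lemma finite_Pcls: "finite (P j \<kappa>)"
  using Pcls_subset finite_S by (rule finite_subset)

lemma dd_nonneg: "j \<in> V \<Longrightarrow> 0 \<le> d j \<kappa>"
  unfolding dd_def using Pcls_subset x_nonneg by (intro sum_nonneg) blast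

lemma hh_nonneg: "j \<in> V \<Longrightarrow> 0 \<le> h j"
  using dd_nonneg by (auto simp: hh_def)

lemma Lev_unique:
  assumes j: "j \<in> V" and i: "i \<in> P j (Lev q)" "i \<in> P j (Lev q')"
  shows "q = q'"
proof -
  have disjoint: False if "q1 < q2" "i \<in> P j (Lev q1)" "i \<in> P j (Lev q2)" for q1 q2
  proof -
    have "(1/2::real) ^ (q2 - 1) * c j * (1/4) \<le> (1/2) ^ q1 * c j * (1/4)"
      using that(1) capacity_pos[OF j] by (intro mult_right_mono power_decreasing) auto
    with that(2,3) show False by (auto simp: Pcls_def gamma_c_def beta_c_def)
  qed
  show ?thesis
  proof (rule linorder_cases[of q q'])
    assume "q < q'"
    with i show ?thesis using disjoint by blast
  next
    assume "q' < q"
    with i show ?thesis using disjoint by blast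
  qed
qed

lemma finite_nonempty_levels:
  assumes j: "j \<in> V" shows "finite {q. P j (Lev q) \<noteq> {}}"
proof (rule inj_on_finite)
  let ?pick = "\<lambda>q. SOME i. i \<in> P j (Lev q)"
  have pick: "?pick q \<in> P j (Lev q)" if "P j (Lev q) \<noteq> {}" for q
    using that by (auto intro: someI)
  show "inj_on ?pick {q. P j (Lev q) \<noteq> {}}"
  proof (rule inj_onI)
    fix q q'
    assume "q \<in> {q. P j (Lev q) \<noteq> {}}" "q' \<in> {q. P j (Lev q) \<noteq> {}}" "?pick q = ?pick q'"
    then have "?pick q \<in> P j (Lev q)" "?pick q \<in> P j (Lev q')"
      using pick[of q] pick[of q'] by simp_all
    then show "q = q'"
      by (rule Lev_unique[OF j])
  qed
  show "?pick ` {q. P j (Lev q) \<noteq> {}} \<subseteq> S" using pick Pcls_subset by blast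
qed (rule finite_S)

lemma dd_Plus_Minus_le:
  assumes j: "j \<in> V" shows "2 * d j Plus + d j Minus \<le> 4"
proof -
  have disjoint: "P j Plus \<inter> P j Minus = {}"
    by (auto simp: Pcls_def)
  have "c j / 4 * (2 * d j Plus + d j Minus)
      = (\<Sum>i\<in>P j Plus. x i j * (c j / 2)) + (\<Sum>i\<in>P j Minus. x i j * (c j / 4))"
    by (simp add: dd_def sum_distrib_left sum_distrib_right algebra_simps)
  also have "\<dots> \<le> (\<Sum>i\<in>P j Plus. x i j * s i) + (\<Sum>i\<in>P j Minus. x i j * s i)"
    using x_nonneg j Pcls_subset by (intro add_mono sum_mono mult_left_mono) (auto simp: Pcls_def)
  also have "\<dots> = (\<Sum>i\<in>P j Plus \<union> P j Minus. x i j * s i)"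
    using disjoint by (simp add: sum.union_disjoint finite_Pcls)
  also have "\<dots> \<le> (\<Sum>i\<in>S. x i j * s i)"
  proof (rule sum_mono2[OF finite_S])
    show "P j Plus \<union> P j Minus \<subseteq> S"
      using Pcls_subset by blast
    show "0 \<le> x i j * s i" if "i \<in> S - (P j Plus \<union> P j Minus)" for i
      using that x_nonneg[OF _ j] size_pos by (simp add: less_imp_le)
  qed
  also have "\<dots> \<le> c j / 4 * 4"
    using capacity[OF j] by simp
  finally show ?thesis
    using capacity_pos[OF j] by (simp add: mult_le_cancel_left_pos)
qed

lemma node_weights_le_1: "j \<in> V \<Longrightarrow> delta_c * d j Plus + delta_c * h j \<le> 1"
  using dd_Plus_Minus_le[of j] dd_nonneg[of j] by (auto simp: hh_def delta_c_def)

lemma pmf_node_dist: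
  assumes j: "j \<in> V"
  shows "pmf (node_dist j) a = (case a of
       C1 \<Rightarrow> delta_c * d j Plus
     | C2 \<Rightarrow> delta_c * h j
     | C3 \<Rightarrow> 1 - delta_c * d j Plus - delta_c * h j)"
  unfolding node_pmf_def
proof (rule pmf_embed_pmf)
  let ?p = "\<lambda>a. case a of C1 \<Rightarrow> delta_c * d j Plus | C2 \<Rightarrow> delta_c * h j
     | C3 \<Rightarrow> 1 - delta_c * d j Plus - delta_c * h j"
  show nonneg: "0 \<le> ?p a" for a
    using node_weights_le_1[OF j] dd_nonneg[OF j] hh_nonneg[OF j]
    by (cases a) (auto simp: delta_c_def)
  have "(\<integral>\<^sup>+a. ennreal (?p a) \<partial>count_space UNIV) = (\<Sum>a\<in>UNIV. ennreal (?p a))"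
    by (rule nn_integral_count_space') auto
  also have "\<dots> = ennreal (\<Sum>a\<in>UNIV. ?p a)"
    using nonneg by (rule sum_ennreal)
  also have "(\<Sum>a\<in>UNIV. ?p a) = 1"
    by (simp add: UNIV_cval)
  finally show "(\<integral>\<^sup>+a. ennreal (?p a) \<partial>count_space UNIV) = 1" by simp
qed

text \<open>A slot distribution is an \<open>embed_pmf\<close>, so it has the intended weights only when the
  mass of its class is positive; the values in the support of \<open>node_pmf\<close> guarantee this.\<close>

lemma dd_Plus_pos: "j \<in> V \<Longrightarrow> C1 \<in> set_pmf (node_dist j) \<Longrightarrow> 0 < d j Plus"
  using dd_nonneg[of j Plus] by (auto simp: set_pmf_iff pmf_node_dist delta_c_def)

lemma dd_Minus_pos: "j \<in> V \<Longrightarrow> C2 \<in> set_pmf (node_dist j) \<Longrightarrow> 0 < d j Minus"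
  using dd_nonneg[of j Minus] by (auto simp: set_pmf_iff pmf_node_dist delta_c_def hh_def split: if_splits)

lemma pmf_slot_dist:
  assumes j: "j \<in> V" and pos: "0 < d j \<kappa>"
  shows "pmf (slot_dist (j, \<kappa>, m)) i = (if i \<in> P j \<kappa> then x i j / d j \<kappa> else 0)"
  unfolding slot_pmf_def fst_conv snd_conv
proof (rule pmf_embed_pmf)
  let ?p = "\<lambda>i. if i \<in> P j \<kappa> then x i j / d j \<kappa> else 0"
  have "0 \<le> x i j" if "i \<in> P j \<kappa>" for i
    using that Pcls_subset x_nonneg[OF _ j] by blast
  then show nonneg: "0 \<le> ?p i" for i
    using pos by simp
  have "(\<integral>\<^sup>+i. ennreal (?p i) \<partial>count_space UNIV) = (\<Sum>i\<in>P j \<kappa>. ennreal (?p i))"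
    by (rule nn_integral_count_space') (auto simp: finite_Pcls)
  also have "\<dots> = ennreal (\<Sum>i\<in>P j \<kappa>. ?p i)"
    using nonneg by (rule sum_ennreal)
  also have "(\<Sum>i\<in>P j \<kappa>. ?p i) = 1"
    using pos by (simp add: sum_divide_distrib[symmetric] dd_def)
  finally show "(\<integral>\<^sup>+i. ennreal (?p i) \<partial>count_space UNIV) = 1" by simp
qed

lemma Pval_C1: "Pval S s c x C1 i j = (if i \<in> P j Plus then x i j / d j Plus else 0)"
  by (auto simp: Pval_def Pcls_def)

lemma Pval_C2:
  "j \<in> V \<Longrightarrow> Pval S s c x C2 i j = (if i \<in> P j Minus then 1 - (1 - x i j / d j Minus)\<^sup>2 else 0)"
  using capacity_pos[of j] by (auto simp: Pval_def Pcls_def)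

lemma Pval_C3:
  assumes j: "j \<in> V" and q: "1 \<le> q" and i: "i \<in> P j (Lev q)"
  shows "Pval S s c x C3 i j = 1 - (1 - x i j / d j (Lev q)) ^ n j q"
proof -
  have level: "(SOME q. 1 \<le> q \<and> i \<in> P j (Lev q)) = q"
    using q i Lev_unique[OF j _ i] by blast
  have "(1/2::real) ^ (q - 1) * c j * (1/4) \<le> 1 * c j * 1"
    using capacity_pos[OF j] by (intro mult_mono power_le_one) auto
  then have fits: "\<not> c j < s i"
    using i by (auto simp: Pcls_def gamma_c_def beta_c_def)
  have "\<exists>q\<ge>1. i \<in> P j (Lev q)"
    using q i by blast
  then show ?thesis
    unfolding Pval_def cval.case if_not_P[OF fits] if_True Let_def level by simp
qed

lemma Pval_C3_no_level: "(\<And>q. 1 \<le> q \<Longrightarrow> i \<notin> P j (Lev q)) \<Longrightarrow> Pval S s c x C3 i j = 0"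
  by (auto simp: Pval_def)

definition node_slots :: "'v \<Rightarrow> cval \<Rightarrow> 'v slot set" where
  "node_slots j a = (case a of
      C1 \<Rightarrow> {(j, Plus, 0)}
    | C2 \<Rightarrow> {(j, Minus, 0), (j, Minus, 1)}
    | C3 \<Rightarrow> {(j, Lev q, m) | q m. 1 \<le> q \<and> m < n j q})"

lemma fst_node_slots: "\<sigma> \<in> node_slots j a \<Longrightarrow> fst \<sigma> = j"
  by (cases a) (auto simp: node_slots_def)

lemma fst_slots: "\<sigma> \<in> slots S s c x V \<zeta> \<Longrightarrow> fst \<sigma> \<in> V"
  by (auto simp: slots_def)

lemma slots_at_node:
  "j \<in> V \<Longrightarrow> {\<sigma> \<in> slots S s c x V \<zeta>. fst \<sigma> = j} = node_slots j (\<zeta> j)"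
  by (cases "\<zeta> j") (auto simp: slots_def node_slots_def less_2_cases_iff)

lemma nn_pos_imp_dd_pos: "j \<in> V \<Longrightarrow> 0 < n j q \<Longrightarrow> 0 < d j (Lev q)"
  using dd_nonneg[of j "Lev q"] by (cases "d j (Lev q) = 0") (auto simp: nn_def)

lemma finite_node_slots:
  assumes j: "j \<in> V" shows "finite (node_slots j a)"
proof (cases a)
  case C3
  have "node_slots j C3 \<subseteq> (\<lambda>(q, m). (j, Lev q, m)) ` (SIGMA q:{q. P j (Lev q) \<noteq> {}}. {..<n j q})"
  proof
    fix \<sigma> assume "\<sigma> \<in> node_slots j C3"
    then obtain q m where \<sigma>: "\<sigma> = (j, Lev q, m)" and m: "m < n j q"
      by (auto simp: node_slots_def)
    then have "P j (Lev q) \<noteq> {}"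
      using nn_pos_imp_dd_pos[OF j, of q] by (auto simp: dd_def)
    with \<sigma> m show "\<sigma> \<in> (\<lambda>(q, m). (j, Lev q, m)) ` (SIGMA q:{q. P j (Lev q) \<noteq> {}}. {..<n j q})"
      by (intro image_eqI[where x = "(q, m)"]) auto
  qed
  moreover have "finite ((\<lambda>(q, m). (j, Lev q, m)) ` (SIGMA q:{q. P j (Lev q) \<noteq> {}}. {..<n j q}))"
    using finite_nonempty_levels[OF j] by auto
  ultimately show ?thesis
    using C3 finite_subset by blast
qed (auto simp: node_slots_def)

lemma finite_slots: "finite (slots S s c x V \<zeta>)"
proof -
  have "slots S s c x V \<zeta> = (\<Union>j\<in>V. {\<sigma> \<in> slots S s c x V \<zeta>. fst \<sigma> = j})"
    using fst_slots by blast
  also have "\<dots> = (\<Union>j\<in>V. node_slots j (\<zeta> j))"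
    using slots_at_node by simp
  finally show ?thesis
    using finite_V finite_node_slots by simp
qed

lemma prod_node_slots_C3:
  assumes j: "j \<in> V"
  shows "(\<Prod>\<sigma>\<in>node_slots j C3. 1 - pmf (slot_dist \<sigma>) i) = 1 - Pval S s c x C3 i j"
proof -
  have pmf_eq: "pmf (slot_dist (j, Lev q, m)) i = (if i \<in> P j (Lev q) then x i j / d j (Lev q) else 0)"
    if "m < n j q" for q m
    using pmf_slot_dist[OF j nn_pos_imp_dd_pos[OF j]] that by simp
  show ?thesis
  proof (cases "\<exists>q\<ge>1. i \<in> P j (Lev q)")
    case True
    then obtain q0 where q0: "1 \<le> q0" "i \<in> P j (Lev q0)" by blast
    let ?hits = "(\<lambda>m. (j, Lev q0, m)) ` {..<n j q0}"
    have "(\<Prod>\<sigma>\<in>node_slots j C3. 1 - pmf (slot_dist \<sigma>) i) = (\<Prod>\<sigma>\<in>?hits. 1 - pmf (slot_dist \<sigma>) i)"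
    proof (rule prod.mono_neutral_right[OF finite_node_slots[OF j]])
      show "?hits \<subseteq> node_slots j C3"
        using q0 by (auto simp: node_slots_def)
      show "\<forall>\<sigma>\<in>node_slots j C3 - ?hits. 1 - pmf (slot_dist \<sigma>) i = 1"
      proof
        fix \<sigma> assume "\<sigma> \<in> node_slots j C3 - ?hits"
        then obtain q m where \<sigma>_eq: "\<sigma> = (j, Lev q, m)" and m: "m < n j q" and "q \<noteq> q0"
          by (auto simp: node_slots_def)
        then have "i \<notin> P j (Lev q)"
          using Lev_unique[OF j q0(2)] by blast
        with \<sigma>_eq m show "1 - pmf (slot_dist \<sigma>) i = 1"
          by (simp add: pmf_eq)
      qed
    qed
    also have "\<dots> = (\<Prod>m<n j q0. 1 - x i j / d j (Lev q0))"
      by (simp add: prod.reindex inj_on_def pmf_eq q0(2))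
    finally show ?thesis
      using Pval_C3[OF j q0] by simp
  next
    case False
    then have "pmf (slot_dist \<sigma>) i = 0" if "\<sigma> \<in> node_slots j C3" for \<sigma>
      using that pmf_eq by (auto simp: node_slots_def)
    with False show ?thesis
      by (simp add: Pval_C3_no_level)
  qed
qed

lemma prod_node_slots:
  assumes j: "j \<in> V" and a: "a \<in> set_pmf (node_dist j)"
  shows "(\<Prod>\<sigma>\<in>node_slots j a. 1 - pmf (slot_dist \<sigma>) i) = 1 - Pval S s c x a i j"
proof (cases a)
  case C1
  with j a show ?thesis
    by (simp add: node_slots_def pmf_slot_dist dd_Plus_pos Pval_C1)
next
  case C2
  with j a show ?thesis
    by (simp add: node_slots_def pmf_slot_dist dd_Minus_pos Pval_C2 power2_eq_square)
next
  case C3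
  with j show ?thesis
    by (simp add: prod_node_slots_C3)
qed

lemma Pval_le_1:
  assumes "j \<in> V" "a \<in> set_pmf (node_dist j)"
  shows "Pval S s c x a i j \<le> 1"
proof -
  have "0 \<le> (\<Prod>\<sigma>\<in>node_slots j a. 1 - pmf (slot_dist \<sigma>) i)"
    by (intro prod_nonneg) (simp add: pmf_le_1)
  then show ?thesis
    by (simp add: prod_node_slots[OF assms])
qed

lemma prob_avoid_slots:
  assumes \<zeta>: "\<And>j. j \<in> V \<Longrightarrow> \<zeta> j \<in> set_pmf (node_dist j)" and A: "A \<subseteq> V"
  shows "measure (tau_pmf S s c x V \<zeta>) {\<tau>. \<forall>\<sigma>\<in>slots S s c x V \<zeta>. fst \<sigma> \<in> A \<longrightarrow> \<tau> \<sigma> \<noteq> i}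
       = (\<Prod>j\<in>A. 1 - Pval S s c x (\<zeta> j) i j)"
proof -
  let ?L = "slots S s c x V \<zeta>"
  let ?f = "\<lambda>\<sigma>. if fst \<sigma> \<in> A then 1 - pmf (slot_dist \<sigma>) i else 1"
  have "measure (tau_pmf S s c x V \<zeta>) {\<tau>. \<forall>\<sigma>\<in>?L. fst \<sigma> \<in> A \<longrightarrow> \<tau> \<sigma> \<noteq> i} = (\<Prod>\<sigma>\<in>?L. ?f \<sigma>)"
    unfolding tau_pmf_def by (rule measure_Pi_pmf_avoid[OF finite_slots])
  also have "\<dots> = (\<Prod>j\<in>V. \<Prod>\<sigma>\<in>{\<sigma> \<in> ?L. fst \<sigma> = j}. ?f \<sigma>)"
    by (rule prod.group[symmetric, OF finite_slots finite_V]) (use fst_slots in blast)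
  also have "\<dots> = (\<Prod>j\<in>V. if j \<in> A then 1 - Pval S s c x (\<zeta> j) i j else 1)"
  proof (rule prod.cong[OF refl])
    fix j assume j: "j \<in> V"
    have "(\<Prod>\<sigma>\<in>{\<sigma> \<in> ?L. fst \<sigma> = j}. ?f \<sigma>)
        = (\<Prod>\<sigma>\<in>node_slots j (\<zeta> j). if j \<in> A then 1 - pmf (slot_dist \<sigma>) i else 1)"
      unfolding slots_at_node[OF j] by (rule prod.cong[OF refl]) (simp add: fst_node_slots)
    also have "\<dots> = (if j \<in> A then 1 - Pval S s c x (\<zeta> j) i j else 1)"
      using prod_node_slots[OF j \<zeta>[OF j]] by simp
    finally show "(\<Prod>\<sigma>\<in>{\<sigma> \<in> ?L. fst \<sigma> = j}. ?f \<sigma>) = (if j \<in> A then 1 - Pval S s c x (\<zeta> j) i j else 1)" .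
  qed
  also have "\<dots> = (\<Prod>j\<in>A. 1 - Pval S s c x (\<zeta> j) i j)"
    using A by (simp add: prod.inter_restrict[symmetric, OF finite_V] Int_absorb1)
  finally show ?thesis .
qed

lemma expectation_ftau:
  assumes "\<And>j. j \<in> V \<Longrightarrow> \<zeta> j \<in> set_pmf (node_dist j)" and "T k \<subseteq> V"
  shows "measure_pmf.expectation (tau_pmf S s c x V \<zeta>) (\<lambda>\<tau>. ftau (slots S s c x V \<zeta>) \<tau> svc T k)
       = 1 - (\<Prod>j\<in>T k. 1 - Pval S s c x (\<zeta> j) (svc k) j)"
proof -
  have "ftau L \<tau> svc T k = 1 - indicator {\<tau>. \<forall>\<sigma>\<in>L. fst \<sigma> \<in> T k \<longrightarrow> \<tau> \<sigma> \<noteq> svc k} \<tau>" for L \<tau>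
    by (auto simp: ftau_def Xset_def indicator_def)
  then show ?thesis
    by (simp add: expectation_one_minus_indicator prob_avoid_slots[OF assms])
qed

lemma expectation_total_reward:
  assumes "\<And>j. j \<in> V \<Longrightarrow> \<zeta> j \<in> set_pmf (node_dist j)" and "\<And>k. k \<in> U \<Longrightarrow> T k \<subseteq> V"
  shows "measure_pmf.expectation (tau_pmf S s c x V \<zeta>) (total_reward S s c x V U svc T w \<zeta>)
       = (\<Sum>k\<in>U. w k * (1 - (\<Prod>j\<in>T k. 1 - Pval S s c x (\<zeta> j) (svc k) j)))"
proof -
  have "integrable (tau_pmf S s c x V \<zeta>) (\<lambda>\<tau>. ftau (slots S s c x V \<zeta>) \<tau> svc T k)" for k
    by (rule measure_pmf.integrable_const_bound[where B = 1]) (auto simp: ftau_def)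
  then show ?thesis
    unfolding total_reward_def
    by (simp add: Bochner_Integration.integral_sum expectation_ftau assms mult.commute)
qed

lemma abs_total_reward_le: "\<bar>total_reward S s c x V U svc T w \<zeta> \<tau>\<bar> \<le> (\<Sum>k\<in>U. \<bar>w k\<bar>)"
  unfolding total_reward_def
  by (rule order_trans[OF sum_abs]) (auto simp: ftau_def intro: sum_mono)

lemma set_zeta_pmf:
  "\<zeta> \<in> set_pmf (zeta_pmf S s c x V) \<Longrightarrow> j \<in> V \<Longrightarrow> \<zeta> j \<in> set_pmf (node_dist j)"
  by (auto simp: zeta_pmf_def set_Pi_pmf[OF finite_V] PiE_dflt_def)

lemma finite_set_zeta_pmf: "finite (set_pmf (zeta_pmf S s c x V))"
  by (auto simp: zeta_pmf_def set_Pi_pmf[OF finite_V] finite_V)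

lemma node_dist_meets_allowed_values:
  assumes pos: "0 < measure (zeta_pmf S s c x V) (Mset V \<zeta>')" and j: "j \<in> V"
  shows "set_pmf (node_dist j) \<inter> allowed_values (\<zeta>' j) \<noteq> {}"
proof
  assume "set_pmf (node_dist j) \<inter> allowed_values (\<zeta>' j) = {}"
  then have "measure (node_dist j) (allowed_values (\<zeta>' j)) = 0"
    by (simp add: measure_pmf_zero_iff)
  then have "measure (zeta_pmf S s c x V) (Mset V \<zeta>') = 0"
    using j finite_V by (auto simp: zeta_pmf_def Mset_eq_Pi measure_Pi_pmf_Pi)
  with pos show False by simp
qed

lemma cond_zeta_pmf:
  assumes "0 < measure (zeta_pmf S s c x V) (Mset V \<zeta>')"
  shows "cond_pmf (zeta_pmf S s c x V) (Mset V \<zeta>')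
       = Pi_pmf V C3 (\<lambda>j. cond_pmf (node_dist j) (allowed_values (\<zeta>' j)))"
  unfolding zeta_pmf_def Mset_eq_Pi
  by (rule cond_Pi_pmf_Pi[OF finite_V node_dist_meets_allowed_values[OF assms]])

lemma expectation_cond_node_dist:
  assumes j: "j \<in> V" and ne: "set_pmf (node_dist j) \<inter> allowed_values v \<noteq> {}"
  shows "measure_pmf.expectation (cond_pmf (node_dist j) (allowed_values v)) (\<lambda>a. 1 - Pval S s c x a i j)
       = 1 - Pgen S s c x v i j"
proof (cases v)
  case None
  have "measure_pmf.expectation (node_dist j) (\<lambda>a. 1 - Pval S s c x a i j)
      = (\<Sum>a\<in>UNIV. (1 - Pval S s c x a i j) * pmf (node_dist j) a)"
    by (rule integral_measure_pmf_real) auto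
  also have "\<dots> = 1 - Pgen S s c x v i j"
    using None by (simp add: UNIV_cval pmf_node_dist[OF j] Pgen_def algebra_simps)
  finally show ?thesis
    using None by (simp add: cond_pmf_UNIV)
next
  case (Some a)
  with ne show ?thesis
    by (simp add: cond_pmf_singleton Pgen_def)
qed

lemma expectation_cond_zeta_pmf_prod:
  assumes pos: "0 < measure (zeta_pmf S s c x V) (Mset V \<zeta>')" and A: "A \<subseteq> V"
  shows "measure_pmf.expectation (cond_pmf (zeta_pmf S s c x V) (Mset V \<zeta>'))
           (\<lambda>\<zeta>. \<Prod>j\<in>A. 1 - Pval S s c x (\<zeta> j) i j)
       = (\<Prod>j\<in>A. 1 - Pgen S s c x (\<zeta>' j) i j)"
proof -
  let ?N = "\<lambda>j. cond_pmf (node_dist j) (allowed_values (\<zeta>' j))"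
  have ne: "set_pmf (node_dist j) \<inter> allowed_values (\<zeta>' j) \<noteq> {}" if "j \<in> A" for j
    using that A node_dist_meets_allowed_values[OF pos] by blast
  have "measure_pmf.expectation (Pi_pmf V C3 ?N) (\<lambda>\<zeta>. \<Prod>j\<in>A. 1 - Pval S s c x (\<zeta> j) i j)
      = (\<Prod>j\<in>A. measure_pmf.expectation (?N j) (\<lambda>a. 1 - Pval S s c x a i j))"
  proof (rule expectation_prod_Pi_pmf_subset[OF finite_V A])
    show "integrable (measure_pmf (?N j)) (\<lambda>a. 1 - Pval S s c x a i j)" for j
      by (rule integrable_measure_pmf_finite) simp
    show "0 \<le> 1 - Pval S s c x a i j" if "j \<in> A" "a \<in> set_pmf (?N j)" for j a
      using that A ne Pval_le_1 by auto
  qed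
  also have "\<dots> = (\<Prod>j\<in>A. 1 - Pgen S s c x (\<zeta>' j) i j)"
    using A ne by (intro prod.cong refl expectation_cond_node_dist) auto
  finally show ?thesis
    by (simp add: cond_zeta_pmf[OF pos])
qed

lemma Eprime_eq:
  assumes pos: "0 < measure (zeta_pmf S s c x V) (Mset V \<zeta>')"
    and T: "\<And>k. k \<in> U \<Longrightarrow> T k \<subseteq> V"
  shows "Eprime S s c x V U svc T w \<zeta>'
       = (\<Sum>k\<in>U. w k * (1 - (\<Prod>j\<in>T k. 1 - Pgen S s c x (\<zeta>' j) (svc k) j)))"
proof -
  let ?Z = "cond_pmf (zeta_pmf S s c x V) (Mset V \<zeta>')"
  let ?miss = "\<lambda>k \<zeta>. \<Prod>j\<in>T k. 1 - Pval S s c x (\<zeta> j) (svc k) j"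
  have ne: "set_pmf (zeta_pmf S s c x V) \<inter> Mset V \<zeta>' \<noteq> {}"
    using pos measure_pmf_zero_iff[of "zeta_pmf S s c x V" "Mset V \<zeta>'"] by auto
  have support: "\<zeta> j \<in> set_pmf (node_dist j)" if "\<zeta> \<in> set_pmf ?Z" "j \<in> V" for \<zeta> j
    using that set_zeta_pmf by (simp add: set_cond_pmf[OF ne])
  have "finite (set_pmf ?Z)"
    using finite_set_zeta_pmf by (simp add: set_cond_pmf[OF ne])
  then have integrable: "integrable ?Z f" for f :: "_ \<Rightarrow> real"
    by (rule integrable_measure_pmf_finite)
  have "Eprime S s c x V U svc T w \<zeta>'
      = measure_pmf.expectation ?Z
          (\<lambda>\<zeta>. measure_pmf.expectation (tau_pmf S s c x V \<zeta>) (total_reward S s c x V U svc T w \<zeta>))"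
    unfolding Eprime_def spsc_experiment_def cond_bind_Pair_fst[OF ne]
    by (subst integral_bind_pmf_bounded[where B = "\<Sum>k\<in>U. \<bar>w k\<bar>"])
       (auto simp: abs_total_reward_le)
  also have "\<dots> = measure_pmf.expectation ?Z (\<lambda>\<zeta>. \<Sum>k\<in>U. w k * (1 - ?miss k \<zeta>))"
    using support T by (intro integral_cong_AE AE_pmfI) (simp_all add: expectation_total_reward)
  also have "\<dots> = (\<Sum>k\<in>U. w k * (1 - measure_pmf.expectation ?Z (?miss k)))"
    by (simp add: integrable Bochner_Integration.integral_sum)
  also have "\<dots> = (\<Sum>k\<in>U. w k * (1 - (\<Prod>j\<in>T k. 1 - Pgen S s c x (\<zeta>' j) (svc k) j)))"
    using T by (simp add: expectation_cond_zeta_pmf_prod[OF pos])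
  finally show ?thesis .
qed

end

theorem theorem14:
  fixes S :: "'s set" and V :: "'v set" and U :: "'u set"
    and s :: "'s \<Rightarrow> real" and c :: "'v \<Rightarrow> real"
    and svc :: "'u \<Rightarrow> 's" and T :: "'u \<Rightarrow> 'v set" and w :: "'u \<Rightarrow> real"
    and x :: "'s \<Rightarrow> 'v \<Rightarrow> real" and y :: "'u \<Rightarrow> real"
    and \<zeta>' :: "'v \<Rightarrow> cval option"
  assumes "spsc_instance S V U s c svc T w"
    and "lp_optimal S V U s c svc T w x y"
    and "measure_pmf.prob (zeta_pmf S s c x V) (Mset V \<zeta>') > 0"
  shows "Eprime S s c x V U svc T w \<zeta>' =
    (\<Sum>k\<in>U. w k * (1 - (\<Prod>j\<in>T k. 1 - Pgen S s c x (\<zeta>' j) (svc k) j)))"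
proof -
  interpret fractional_placement S V s c x
    using assms(1,2) by unfold_locales (auto simp: spsc_instance_def lp_optimal_def lp_feasible_def)
  show ?thesis
    using assms(1) by (intro Eprime_eq assms(3)) (auto simp: spsc_instance_def)
qed

end
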